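(* Let $X$ be a spectrally extremal graph of diameter $d$ with adjacency matrix $A$ and distinct eigenvalues $\theta_0 > \dots > \theta_d$. Suppose $X$ admits perfect state transfer at time $\tau$ between vertices $u$ and $v$ with $d(u,v) = d$. Then for all vertices $z,w$ with $d(z,w) = d$ we have $(A^d)_{z,w} \le (A^d)_{u,v}$, and equality holds if and only if $X$ admits perfect state transfer between $z$ and $w$ at time $\tau$.
   Context: $X$ is a finite simple connected graph. A graph of diameter $d$ has at least $d+1$ distinct adjacency eigenvalues; it is spectrally extremal if it has exactly $d+1$. $e_w$ denotes the standard basis vector of vertex $w$. $X$ admits perfect state transfer between $u$ and $v$ at time $\tau$ if $|e_v^T \exp(\mathrm{i}\tau A) e_u| = 1$. *)

theory Defs
  imports Complex_Main "Jordan_Normal_Form.Char_Poly"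
begin

definition simple_graph :: "nat \<Rightarrow> (nat \<Rightarrow> nat \<Rightarrow> bool) \<Rightarrow> bool" where
  "simple_graph n E \<longleftrightarrow> (\<forall>i j. E i j \<longrightarrow> i < n \<and> j < n) \<and> (\<forall>i j. E i j \<longrightarrow> E j i) \<and> (\<forall>i. \<not> E i i)"

definition adj_mat :: "nat \<Rightarrow> (nat \<Rightarrow> nat \<Rightarrow> bool) \<Rightarrow> real mat" where
  "adj_mat n E = mat n n (\<lambda>(i,j). if E i j then 1 else 0)"

definition walk_of_len :: "nat \<Rightarrow> (nat \<Rightarrow> nat \<Rightarrow> bool) \<Rightarrow> nat \<Rightarrow> nat \<Rightarrow> nat \<Rightarrow> bool" where
  "walk_of_len n E k u v \<longleftrightarrow> (\<exists>p::nat \<Rightarrow> nat. p 0 = u \<and> p k = v \<and> (\<forall>i\<le>k. p i < n) \<and> (\<forall>i<k. E (p i) (p (Suc i))))"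

definition connected_graph :: "nat \<Rightarrow> (nat \<Rightarrow> nat \<Rightarrow> bool) \<Rightarrow> bool" where
  "connected_graph n E \<longleftrightarrow> 0 < n \<and> (\<forall>u<n. \<forall>v<n. \<exists>k. walk_of_len n E k u v)"

definition graph_dist :: "nat \<Rightarrow> (nat \<Rightarrow> nat \<Rightarrow> bool) \<Rightarrow> nat \<Rightarrow> nat \<Rightarrow> nat" where
  "graph_dist n E u v = (LEAST k. walk_of_len n E k u v)"

definition diameter :: "nat \<Rightarrow> (nat \<Rightarrow> nat \<Rightarrow> bool) \<Rightarrow> nat" where
  "diameter n E = Max {graph_dist n E u v | u v. u < n \<and> v < n}"

definition spectrally_extremal :: "nat \<Rightarrow> (nat \<Rightarrow> nat \<Rightarrow> bool) \<Rightarrow> bool" where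
  "spectrally_extremal n E \<longleftrightarrow> card {\<theta>. eigenvalue (adj_mat n E) \<theta>} = diameter n E + 1"

definition transition_entry :: "nat \<Rightarrow> (nat \<Rightarrow> nat \<Rightarrow> bool) \<Rightarrow> real \<Rightarrow> nat \<Rightarrow> nat \<Rightarrow> complex" where
  "transition_entry n E t v u =
     (\<Sum>k. (\<i> * complex_of_real t) ^ k / of_nat (fact k) * complex_of_real ((adj_mat n E ^\<^sub>m k) $$ (v, u)))"

definition pst :: "nat \<Rightarrow> (nat \<Rightarrow> nat \<Rightarrow> bool) \<Rightarrow> real \<Rightarrow> nat \<Rightarrow> nat \<Rightarrow> bool" where
  "pst n E t u v \<longleftrightarrow> cmod (transition_entry n E t v u) = 1"

end

theory Submission
  imports Defs "Jordan_Normal_Form.Schur_Decomposition"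
begin

text \<open>Let \<open>A\<close> be the adjacency matrix and \<open>d\<close> the diameter. Since \<open>A\<close> is real symmetric, it is
  annihilated by \<open>\<Prod>\<^sub>\<theta> (A - \<theta> I)\<close> over its distinct eigenvalues, a monic polynomial of degree
  \<open>d + 1\<close> by spectral extremality. Hence every power \<open>A\<^sup>k\<close> is a linear combination
  \<open>\<Sum>\<^sub>m\<^sub>\<le>\<^sub>d b\<^sub>k\<^sub>m A\<^sup>m\<close>. For a pair \<open>z, w\<close> at distance \<open>d\<close> the entries \<open>(A\<^sup>m)\<^sub>z\<^sub>w\<close> with \<open>m < d\<close> vanish,
  so \<open>exp (i \<tau> A)\<^sub>w\<^sub>z = (A\<^sup>d)\<^sub>z\<^sub>w F\<close> with \<open>F = \<Sum>\<^sub>k (i \<tau>)\<^sup>k b\<^sub>k\<^sub>d / k!\<close> independent of the pair.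
  Perfect state transfer between \<open>u\<close> and \<open>v\<close> gives \<open>(A\<^sup>d)\<^sub>u\<^sub>v |F| = 1\<close>, while unitarity of
  \<open>exp (i \<tau> A)\<close> bounds every \<open>(A\<^sup>d)\<^sub>z\<^sub>w |F|\<close> by \<open>1\<close>.\<close>

section \<open>Entries of matrix powers\<close>

lemma index_mult_mat_sum:
  "X \<in> carrier_mat n n \<Longrightarrow> Y \<in> carrier_mat n n \<Longrightarrow> i < n \<Longrightarrow> j < n \<Longrightarrow>
    (X * Y) $$ (i,j) = (\<Sum>l<n. X $$ (i,l) * Y $$ (l,j))"
  by (auto simp: scalar_prod_def lessThan_atLeast0 intro!: sum.cong)

lemma pow_mat_Suc_left: "(A :: 'a :: semiring_1 mat) \<in> carrier_mat n n \<Longrightarrow> A ^\<^sub>m Suc k = A * A ^\<^sub>m k"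
proof (induct k)
  case (Suc k)
  have "A ^\<^sub>m Suc (Suc k) = (A * A ^\<^sub>m k) * A" using Suc by simp
  also have "\<dots> = A * (A ^\<^sub>m k * A)" using Suc.prems by (simp add: assoc_mult_mat[of _ n n _ n _ n])
  finally show ?case by simp
qed simp

lemma pow_mat_add: "(A :: 'a :: semiring_1 mat) \<in> carrier_mat n n \<Longrightarrow> A ^\<^sub>m (a + b) = A ^\<^sub>m a * A ^\<^sub>m b"
  by (induct b) (simp_all add: assoc_mult_mat[of _ n n _ n _ n])

lemma index_pow_mat_Suc:
  "A \<in> carrier_mat n n \<Longrightarrow> i < n \<Longrightarrow> j < n \<Longrightarrow> (A ^\<^sub>m Suc k) $$ (i,j) = (\<Sum>l<n. (A ^\<^sub>m k) $$ (i,l) * A $$ (l,j))"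
  using index_mult_mat_sum[of "A ^\<^sub>m k" n A i j] by simp

lemma index_pow_mat_Suc_left:
  "A \<in> carrier_mat n n \<Longrightarrow> i < n \<Longrightarrow> j < n \<Longrightarrow> (A ^\<^sub>m Suc k) $$ (i,j) = (\<Sum>l<n. A $$ (i,l) * (A ^\<^sub>m k) $$ (l,j))"
  using index_mult_mat_sum[of A n "A ^\<^sub>m k" i j] pow_mat_Suc_left[of A n k] by simp

lemma pow_mat_symmetric:
  fixes A :: "'a :: comm_semiring_1 mat"
  assumes A: "A \<in> carrier_mat n n" and sym: "\<And>i j. i < n \<Longrightarrow> j < n \<Longrightarrow> A $$ (i,j) = A $$ (j,i)"
    and i: "i < n" and j: "j < n"
  shows "(A ^\<^sub>m k) $$ (i,j) = (A ^\<^sub>m k) $$ (j,i)"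
  using i j
proof (induct k arbitrary: i j)
  case (Suc k)
  have "(A ^\<^sub>m Suc k) $$ (i,j) = (\<Sum>l<n. (A ^\<^sub>m k) $$ (i,l) * A $$ (l,j))"
    using index_pow_mat_Suc[OF A Suc.prems] .
  also have "\<dots> = (\<Sum>l<n. A $$ (j,l) * (A ^\<^sub>m k) $$ (l,i))"
    by (rule sum.cong) (use Suc sym in \<open>auto simp: mult.commute\<close>)
  also have "\<dots> = (A ^\<^sub>m Suc k) $$ (j,i)" using index_pow_mat_Suc_left[OF A Suc.prems(2,1)] by simp
  finally show ?case .
qed (use A in auto)

section \<open>Real symmetric matrices\<close>

lemma eigenvalue_of_real_symmetric_real:
  fixes A :: "real mat"
  assumes A: "A \<in> carrier_mat n n" and sym: "\<And>i j. i < n \<Longrightarrow> j < n \<Longrightarrow> A $$ (i,j) = A $$ (j,i)"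
    and ev: "eigenvalue (map_mat complex_of_real A) l"
  shows "l = complex_of_real (Re l)"
proof -
  let ?B = "map_mat complex_of_real A"
  obtain v where v: "v \<in> carrier_vec n" "v \<noteq> 0\<^sub>v n" "?B *\<^sub>v v = l \<cdot>\<^sub>v v"
    using ev A unfolding eigenvalue_def eigenvector_def by auto
  have row: "(\<Sum>j<n. complex_of_real (A $$ (i,j)) * v $ j) = l * v $ i" if "i < n" for i
  proof -
    have "(?B *\<^sub>v v) $ i = l * v $ i" using v(3) v(1) that by (metis index_smult_vec(1) carrier_vecD)
    moreover have "(?B *\<^sub>v v) $ i = (\<Sum>j<n. complex_of_real (A $$ (i,j)) * v $ j)"
      using that A v(1) by (auto simp: scalar_prod_def lessThan_atLeast0 intro!: sum.cong)
    ultimately show ?thesis by simp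
  qed
  \<comment> \<open>The Rayleigh quotient \<open>v\<^sup>* A v / v\<^sup>* v\<close> equals \<open>l\<close>, and both of its parts are real.\<close>
  define s where "s = (\<Sum>i<n. cnj (v $ i) * (\<Sum>j<n. complex_of_real (A $$ (i,j)) * v $ j))"
  define N where "N = (\<Sum>i<n. cnj (v $ i) * v $ i)"
  have sN: "s = l * N" unfolding s_def N_def using row by (simp add: sum_distrib_left mult_ac)
  have "cnj s = (\<Sum>i<n. \<Sum>j<n. complex_of_real (A $$ (i,j)) * v $ i * cnj (v $ j))"
    unfolding s_def by (simp add: cnj_sum sum_distrib_left mult_ac)
  also have "\<dots> = (\<Sum>j<n. \<Sum>i<n. complex_of_real (A $$ (i,j)) * v $ i * cnj (v $ j))"
    by (rule sum.swap)
  also have "\<dots> = s" unfolding s_def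
    by (auto simp: sum_distrib_left mult_ac sym intro!: sum.cong)
  finally have s_real: "cnj s = s" .
  have N_eq: "N = complex_of_real (\<Sum>i<n. (cmod (v $ i))^2)"
    unfolding N_def of_real_sum
    by (rule sum.cong) (auto simp: complex_norm_square mult.commute simp del: of_real_power)
  obtain i where i: "i < n" "v $ i \<noteq> 0"
    using v(1,2) by (metis carrier_vecD eq_vecI index_zero_vec(1) index_zero_vec(2))
  have "(\<Sum>i<n. (cmod (v $ i))^2) > 0"
    by (rule sum_pos2[of _ i]) (use i in auto)
  then have "N \<noteq> 0" and "cnj N = N" unfolding N_eq by (auto simp del: of_real_sum of_real_power)
  with s_real sN have "cnj l = l" by (metis complex_cnj_mult mult_cancel_right)
  then show ?thesis by (metis Reals_cnj_iff of_real_Re)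
qed

interpretation of_real_poly_hom: map_poly_inj_comm_ring_hom "complex_of_real :: real \<Rightarrow> complex" ..

lemma map_poly_of_real_prod_linear:
  "map_poly complex_of_real (\<Prod>a\<leftarrow>es. [:-a,1:]) = (\<Prod>a\<leftarrow>es. [:-complex_of_real a,1:])"
proof (induct es)
  case (Cons a es)
  show ?case by (simp only: list.map prod_list.Cons of_real_poly_hom.hom_mult Cons) simp
qed simp

lemma char_poly_real_symmetric_splits:
  fixes A :: "real mat"
  assumes A: "A \<in> carrier_mat n n" and sym: "\<And>i j. i < n \<Longrightarrow> j < n \<Longrightarrow> A $$ (i,j) = A $$ (j,i)"
  shows "\<exists>es. char_poly A = (\<Prod>e\<leftarrow>es. [:-e,1:])"
proof -
  let ?B = "map_mat complex_of_real A"
  obtain as where as: "char_poly ?B = (\<Prod>a\<leftarrow>as. [:-a,1:])"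
    using char_poly_factorized[of ?B n] A by auto
  have real: "a = complex_of_real (Re a)" if "a \<in> set as" for a
  proof -
    have "poly (char_poly ?B) a = 0"
      unfolding as poly_prod_list using that by (auto simp: prod_list_zero_iff)
    then have "eigenvalue ?B a" using eigenvalue_root_char_poly[of ?B n] A by simp
    then show ?thesis using eigenvalue_of_real_symmetric_real[OF A sym] by blast
  qed
  have "(\<Prod>a\<leftarrow>as. [:-a,1:]) = (\<Prod>a\<leftarrow>map Re as. [:-complex_of_real a,1:])"
    using real by (induct as) auto
  also have "\<dots> = map_poly complex_of_real (\<Prod>a\<leftarrow>map Re as. [:-a,1:])"
    by (rule map_poly_of_real_prod_linear[symmetric])
  finally have "map_poly complex_of_real (char_poly A) = map_poly complex_of_real (\<Prod>a\<leftarrow>map Re as. [:-a,1:])"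
    using as of_real_hom.char_poly_hom[OF A] by metis
  then have "char_poly A = (\<Prod>a\<leftarrow>map Re as. [:-a,1:])"
    by (metis of_real_poly_hom.injectivity)
  then show ?thesis by blast
qed

lemma symmetric_square_mult_zero:
  fixes C G :: "real mat"
  assumes C: "C \<in> carrier_mat n n" and G: "G \<in> carrier_mat n n"
    and sym: "\<And>i j. i < n \<Longrightarrow> j < n \<Longrightarrow> C $$ (i,j) = C $$ (j,i)"
    and z: "C * (C * G) = 0\<^sub>m n n"
  shows "C * G = 0\<^sub>m n n"
proof -
  let ?H = "C * G"
  have H: "?H \<in> carrier_mat n n" using C G by simp
  \<comment> \<open>the squared length of column \<open>j\<close> of \<open>C G\<close> is \<open>(G\<^sup>T C (C G))\<^sub>j\<^sub>j = 0\<close>\<close>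
  have "?H $$ (i,j) = 0" if i: "i < n" and j: "j < n" for i j
  proof -
    have "(\<Sum>i<n. (?H $$ (i,j))^2) = (\<Sum>i<n. \<Sum>l<n. ?H $$ (i,j) * C $$ (i,l) * G $$ (l,j))"
      by (simp add: power2_eq_square index_mult_mat_sum[OF C G _ j] sum_distrib_left mult.assoc)
    also have "\<dots> = (\<Sum>l<n. G $$ (l,j) * (\<Sum>i<n. C $$ (l,i) * ?H $$ (i,j)))"
      by (subst sum.swap) (auto simp: sum_distrib_left sym mult_ac intro!: sum.cong)
    also have "\<dots> = (\<Sum>l<n. G $$ (l,j) * (C * ?H) $$ (l,j))"
      by (rule sum.cong) (auto simp: index_mult_mat_sum[OF C H _ j])
    also have "\<dots> = 0" using z j by simp
    finally have "(\<Sum>i<n. (?H $$ (i,j))^2) = 0" .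
    then show ?thesis using i by (subst (asm) sum_nonneg_eq_0_iff) auto
  qed
  then show ?thesis using C G by (intro eq_matI) auto
qed

section \<open>Products of shifted matrices\<close>

primrec shift_prod :: "nat \<Rightarrow> 'a :: comm_ring_1 mat \<Rightarrow> 'a list \<Rightarrow> 'a mat" where
  "shift_prod n A [] = 1\<^sub>m n"
| "shift_prod n A (e # L) = (A - e \<cdot>\<^sub>m 1\<^sub>m n) * shift_prod n A L"

lemma shift_carrier_mat[simp]: "A \<in> carrier_mat n n \<Longrightarrow> A - e \<cdot>\<^sub>m 1\<^sub>m n \<in> carrier_mat n n"
  by (rule minus_carrier_mat) simp

lemma shift_prod_carrier_mat[simp]: "A \<in> carrier_mat n n \<Longrightarrow> shift_prod n A L \<in> carrier_mat n n"
  by (induct L) auto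

lemma shift_mult_commute:
  fixes A M :: "'a :: comm_ring_1 mat"
  assumes A: "A \<in> carrier_mat n n" and M: "M \<in> carrier_mat n n" and AM: "A * M = M * A"
  shows "(A - e \<cdot>\<^sub>m 1\<^sub>m n) * M = M * (A - e \<cdot>\<^sub>m 1\<^sub>m n)"
proof -
  have I: "1\<^sub>m n \<in> carrier_mat n n" by simp
  have "(A - e \<cdot>\<^sub>m 1\<^sub>m n) * M = A * M - e \<cdot>\<^sub>m M"
    using minus_mult_distrib_mat[OF A smult_carrier_mat[OF I] M] mult_smult_assoc_mat[OF I M] M by simp
  moreover have "M * (A - e \<cdot>\<^sub>m 1\<^sub>m n) = M * A - e \<cdot>\<^sub>m M"
    using mult_minus_distrib_mat[OF M A smult_carrier_mat[OF I]] mult_smult_distrib[OF M I] M by simp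
  ultimately show ?thesis using AM by simp
qed

lemma shift_prod_snoc:
  assumes A: "A \<in> carrier_mat n n"
  shows "shift_prod n A (L @ [e]) = shift_prod n A L * (A - e \<cdot>\<^sub>m 1\<^sub>m n)"
  by (induct L) (use A in \<open>simp_all add: assoc_mult_mat[of _ n n _ n _ n]\<close>)

lemma shift_prod_remove1:
  assumes A: "A \<in> carrier_mat n n" and e: "e \<in> set L"
  shows "shift_prod n A L = (A - e \<cdot>\<^sub>m 1\<^sub>m n) * shift_prod n A (remove1 e L)"
  using e
proof (induct L)
  case (Cons a L)
  show ?case
  proof (cases "a = e")
    case False
    with Cons have "e \<in> set L" by simp
    let ?R = "shift_prod n A (remove1 e L)"
    have R: "?R \<in> carrier_mat n n" using A by simp
    have "(A - a \<cdot>\<^sub>m 1\<^sub>m n) * (A - e \<cdot>\<^sub>m 1\<^sub>m n) = (A - e \<cdot>\<^sub>m 1\<^sub>m n) * (A - a \<cdot>\<^sub>m 1\<^sub>m n)"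
      using shift_mult_commute[OF A shift_carrier_mat[OF A]] shift_mult_commute[OF A A] by simp
    then have "(A - a \<cdot>\<^sub>m 1\<^sub>m n) * ((A - e \<cdot>\<^sub>m 1\<^sub>m n) * ?R) = (A - e \<cdot>\<^sub>m 1\<^sub>m n) * ((A - a \<cdot>\<^sub>m 1\<^sub>m n) * ?R)"
      using A R by (simp add: assoc_mult_mat[of _ n n _ n _ n, symmetric])
    with Cons(1)[OF \<open>e \<in> set L\<close>] False show ?thesis by simp
  qed simp
qed simp

lemma shift_prod_mset_eq:
  assumes A: "A \<in> carrier_mat n n"
  shows "mset L = mset L' \<Longrightarrow> shift_prod n A L = shift_prod n A L'"
proof (induct L arbitrary: L')
  case (Cons a L)
  have a: "a \<in> set L'" using Cons(2) by (metis list.set_intros(1) set_mset_mset)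
  have "mset L = mset (remove1 a L')" by (simp add: Cons(2)[symmetric])
  then have "shift_prod n A L = shift_prod n A (remove1 a L')" by (rule Cons(1))
  then show ?case using shift_prod_remove1[OF A a] by simp
qed simp

lemma shift_prod_similar:
  assumes A: "A \<in> carrier_mat n n" and B: "B \<in> carrier_mat n n"
    and P: "P \<in> carrier_mat n n" and Q: "Q \<in> carrier_mat n n"
    and PQ: "P * Q = 1\<^sub>m n" and QP: "Q * P = 1\<^sub>m n" and APBQ: "A = P * B * Q"
  shows "shift_prod n A L = P * shift_prod n B L * Q"
proof (induct L)
  case Nil
  then show ?case using PQ P by simp
next
  case (Cons e L)
  let ?R = "shift_prod n B L" and ?C = "B - e \<cdot>\<^sub>m 1\<^sub>m n"
  have I: "1\<^sub>m n \<in> carrier_mat n n" by simp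
  have "P * ?C = P * B - e \<cdot>\<^sub>m P"
    using mult_minus_distrib_mat[OF P B smult_carrier_mat[OF I]] mult_smult_distrib[OF P I] P by simp
  moreover have "(P * B - e \<cdot>\<^sub>m P) * Q = P * B * Q - e \<cdot>\<^sub>m (P * Q)"
    using minus_mult_distrib_mat[of "P*B" n n "e \<cdot>\<^sub>m P" Q n] P B Q mult_smult_assoc_mat[OF P Q] by simp
  ultimately have shift: "A - e \<cdot>\<^sub>m 1\<^sub>m n = P * ?C * Q" using APBQ PQ by simp
  have R: "?R \<in> carrier_mat n n" and C: "?C \<in> carrier_mat n n" using B by simp_all
  have "shift_prod n A (e # L) = (P * ?C * Q) * (P * ?R * Q)" using Cons shift by simp
  also have "\<dots> = P * ?C * (Q * P) * ?R * Q"
    using P Q R C by (simp add: assoc_mult_mat[of _ n n _ n _ n])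
  also have "\<dots> = P * (?C * ?R) * Q" using QP P Q R C by (simp add: assoc_mult_mat[of _ n n _ n _ n])
  finally show ?case by simp
qed

lemma shift_prod_upper_triangular_cols_zero:
  assumes B: "B \<in> carrier_mat n n" and ut: "upper_triangular B" and k: "k \<le> n"
    and i: "i < n" and j: "j < k"
  shows "shift_prod n B (map (\<lambda>i. B $$ (i,i)) [0..<k]) $$ (i,j) = 0"
  using k i j
proof (induct k arbitrary: i j)
  case (Suc k)
  let ?M = "shift_prod n B (map (\<lambda>i. B $$ (i,i)) [0..<k])"
  let ?C = "B - B $$ (k,k) \<cdot>\<^sub>m 1\<^sub>m n"
  have M: "?M \<in> carrier_mat n n" using B by simp
  \<comment> \<open>column \<open>j\<close> of \<open>?C\<close> is supported on rows \<open>\<le> j\<close>, and vanishes at row \<open>k\<close> when \<open>j = k\<close>\<close>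
  have "?M $$ (i,l) * ?C $$ (l,j) = 0" if "l < n" for l
  proof (cases "l < k")
    case True then show ?thesis using Suc that by simp
  next
    case False
    show ?thesis
    proof (cases "j < l")
      case True
      then have "B $$ (l,j) = 0" using ut B that unfolding upper_triangular_def by auto
      then show ?thesis using True that Suc.prems B by auto
    next
      case False
      with \<open>\<not> l < k\<close> Suc.prems have "l = k" "j = k" by auto
      then show ?thesis using that B by auto
    qed
  qed
  moreover have "(?M * ?C) $$ (i,j) = (\<Sum>l = 0..<n. ?M $$ (i,l) * ?C $$ (l,j))"
    using carrier_matD[OF M] B Suc.prems by (auto simp: scalar_prod_def)
  ultimately have "(?M * ?C) $$ (i,j) = 0" by simp
  then show ?case using B by (simp add: shift_prod_snoc)
qed simp

lemma shift_prod_char_poly_roots_zero: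
  fixes A :: "'a :: conjugatable_ordered_field mat"
  assumes A: "A \<in> carrier_mat n n" and es: "char_poly A = (\<Prod>e\<leftarrow>es. [:-e,1:])"
  shows "shift_prod n A es = 0\<^sub>m n n"
proof -
  obtain B P Q where sd: "schur_decomposition A es = (B,P,Q)" by (cases "schur_decomposition A es") auto
  from schur_decomposition[OF A es sd] have
    sw: "similar_mat_wit A B P Q" and ut: "upper_triangular B" and dg: "diag_mat B = es" by auto
  from sw A have B: "B \<in> carrier_mat n n" and P: "P \<in> carrier_mat n n" and Q: "Q \<in> carrier_mat n n"
    and PQ: "P * Q = 1\<^sub>m n" and QP: "Q * P = 1\<^sub>m n" and APBQ: "A = P * B * Q"
    unfolding similar_mat_wit_def Let_def by auto
  have "map (\<lambda>i. B $$ (i,i)) [0..<n] = es" using dg B unfolding diag_mat_def by auto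
  then have "shift_prod n B es = 0\<^sub>m n n"
    using shift_prod_upper_triangular_cols_zero[OF B ut le_refl] shift_prod_carrier_mat[OF B, of es]
    by (intro eq_matI) auto
  then show ?thesis using shift_prod_similar[OF A B P Q PQ QP APBQ] P Q by simp
qed

lemma shift_prod_remdups_zero:
  fixes A :: "real mat"
  assumes A: "A \<in> carrier_mat n n" and sym: "\<And>i j. i < n \<Longrightarrow> j < n \<Longrightarrow> A $$ (i,j) = A $$ (j,i)"
  shows "shift_prod n A L = 0\<^sub>m n n \<Longrightarrow> shift_prod n A (remdups L) = 0\<^sub>m n n"
proof (induct "length L" arbitrary: L rule: less_induct)
  case less
  show ?case
  proof (cases "distinct L")
    case True then show ?thesis using less(2) by (simp add: distinct_remdups_id)
  next
    case False
    then obtain e where "count (mset L) e \<noteq> (if e \<in> set L then 1 else 0)"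
      unfolding distinct_count_atmost_1 by blast
    then have eL: "e \<in> set L" and "count (mset L) e \<noteq> 1"
      by (auto split: if_splits simp: count_eq_zero_iff[symmetric])
    moreover have "count (mset L) e \<noteq> 0" using eL by (simp add: count_eq_zero_iff)
    ultimately have "count (mset L) e \<ge> 2" by linarith
    let ?L1 = "remove1 e L"
    have "count (mset ?L1) e \<ge> 1" using \<open>count (mset L) e \<ge> 2\<close> by simp
    then have eL1: "e \<in> set ?L1" by (metis count_eq_zero_iff not_one_le_zero set_mset_mset)
    let ?C = "A - e \<cdot>\<^sub>m 1\<^sub>m n"
    have Csym: "\<And>i j. i < n \<Longrightarrow> j < n \<Longrightarrow> ?C $$ (i,j) = ?C $$ (j,i)" using A sym by auto
    have "?C * (?C * shift_prod n A (remove1 e ?L1)) = 0\<^sub>m n n"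
      using less(2) shift_prod_remove1[OF A eL] shift_prod_remove1[OF A eL1] by simp
    then have "shift_prod n A ?L1 = 0\<^sub>m n n"
      using symmetric_square_mult_zero[OF shift_carrier_mat[OF A] shift_prod_carrier_mat[OF A] Csym]
        shift_prod_remove1[OF A eL1] by simp
    moreover have "length ?L1 < length L" using length_pos_if_in_set[OF eL] eL by (simp add: length_remove1)
    ultimately have "shift_prod n A (remdups ?L1) = 0\<^sub>m n n" using less(1) by blast
    moreover have "set ?L1 = set L"
      using eL1 set_remove1_subset[of e L] by (metis in_set_remove1 subsetI subset_antisym)
    then have "mset (remdups ?L1) = mset (remdups L)"
      by (simp add: set_eq_iff_mset_eq_distinct[symmetric])
    ultimately show ?thesis using shift_prod_mset_eq[OF A] by metis
  qed
qed

lemma symmetric_distinct_eigenvalues_annihilate: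
  fixes A :: "real mat"
  assumes A: "A \<in> carrier_mat n n" and sym: "\<And>i j. i < n \<Longrightarrow> j < n \<Longrightarrow> A $$ (i,j) = A $$ (j,i)"
  shows "\<exists>L. distinct L \<and> set L = {\<theta>. eigenvalue A \<theta>} \<and> shift_prod n A L = 0\<^sub>m n n"
proof -
  obtain es where es: "char_poly A = (\<Prod>e\<leftarrow>es. [:-e,1:])"
    using char_poly_real_symmetric_splits[OF A sym] by blast
  have "shift_prod n A (remdups es) = 0\<^sub>m n n"
    using shift_prod_remdups_zero[OF A sym shift_prod_char_poly_roots_zero[OF A es]] .
  moreover have "set es = {\<theta>. eigenvalue A \<theta>}"
    using eigenvalue_root_char_poly[OF A] unfolding es poly_prod_list
    by (auto simp: prod_list_zero_iff)
  ultimately show ?thesis by (intro exI[of _ "remdups es"]) auto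
qed

section \<open>Powers as combinations of lower powers\<close>

lemma index_mult_pow_combination:
  fixes A :: "'a :: comm_semiring_1 mat"
  assumes A: "A \<in> carrier_mat n n" and i: "i < n" and j: "j < n"
  shows "(\<Sum>l<n. A $$ (i,l) * (\<Sum>m<N. c m * (A ^\<^sub>m m) $$ (l,j))) = (\<Sum>m<N. c m * (A ^\<^sub>m Suc m) $$ (i,j))"
proof -
  have "(\<Sum>l<n. A $$ (i,l) * (\<Sum>m<N. c m * (A ^\<^sub>m m) $$ (l,j))) =
      (\<Sum>m<N. \<Sum>l<n. c m * (A $$ (i,l) * (A ^\<^sub>m m) $$ (l,j)))"
    by (simp add: sum_distrib_left mult_ac sum.swap[of _ "{..<n}"])
  also have "\<dots> = (\<Sum>m<N. c m * (A ^\<^sub>m Suc m) $$ (i,j))"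
    by (rule sum.cong[OF refl], subst index_pow_mat_Suc_left[OF A i j]) (simp add: sum_distrib_left)
  finally show ?thesis .
qed

lemma index_shift_mult:
  fixes A M :: "'a :: comm_ring_1 mat"
  assumes A: "A \<in> carrier_mat n n" and M: "M \<in> carrier_mat n n" and i: "i < n" and j: "j < n"
  shows "((A - e \<cdot>\<^sub>m 1\<^sub>m n) * M) $$ (i,j) = (\<Sum>l<n. A $$ (i,l) * M $$ (l,j)) - e * M $$ (i,j)"
proof -
  have "((A - e \<cdot>\<^sub>m 1\<^sub>m n) * M) $$ (i,j) = (\<Sum>l<n. A $$ (i,l) * M $$ (l,j) - (if i = l then e * M $$ (l,j) else 0))"
    using index_mult_mat_sum[OF shift_carrier_mat[OF A] M i j] A i by (auto simp: algebra_simps intro!: sum.cong)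
  also have "\<dots> = (\<Sum>l<n. A $$ (i,l) * M $$ (l,j)) - e * M $$ (i,j)"
    using i by (simp add: sum_subtractf sum.delta)
  finally show ?thesis .
qed

lemma shift_prod_expansion:
  fixes A :: "'a :: comm_ring_1 mat"
  assumes A: "A \<in> carrier_mat n n"
  shows "\<exists>c. \<forall>i<n. \<forall>j<n. shift_prod n A L $$ (i,j) =
           (A ^\<^sub>m length L) $$ (i,j) + (\<Sum>m<length L. c m * (A ^\<^sub>m m) $$ (i,j))"
proof (induct L)
  case Nil then show ?case using A by auto
next
  case (Cons e L)
  let ?N = "length L"
  from Cons obtain c where c: "\<And>i j. i < n \<Longrightarrow> j < n \<Longrightarrow>
      shift_prod n A L $$ (i,j) = (A ^\<^sub>m ?N) $$ (i,j) + (\<Sum>m<?N. c m * (A ^\<^sub>m m) $$ (i,j))"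
    by blast
  \<comment> \<open>coefficients of \<open>(x - e) (x\<^sup>N + \<Sum>\<^sub>m\<^sub><\<^sub>N c\<^sub>m x\<^sup>m)\<close>\<close>
  define c' where "c' m = (if m = 0 then 0 else c (m - 1)) - e * (if m = ?N then 1 else c m)" for m
  have "shift_prod n A (e # L) $$ (i,j) =
      (A ^\<^sub>m Suc ?N) $$ (i,j) + (\<Sum>m<Suc ?N. c' m * (A ^\<^sub>m m) $$ (i,j))" if i: "i < n" and j: "j < n" for i j
  proof -
    have "shift_prod n A (e # L) $$ (i,j) = (\<Sum>l<n. A $$ (i,l) * shift_prod n A L $$ (l,j)) - e * shift_prod n A L $$ (i,j)"
      using index_shift_mult[OF A shift_prod_carrier_mat[OF A] i j] by simp
    also have "(\<Sum>l<n. A $$ (i,l) * shift_prod n A L $$ (l,j)) =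
        (A ^\<^sub>m Suc ?N) $$ (i,j) + (\<Sum>m<?N. c m * (A ^\<^sub>m Suc m) $$ (i,j))"
      using c j index_mult_pow_combination[OF A i j] index_pow_mat_Suc_left[OF A i j]
      by (simp add: distrib_left sum.distrib)
    also have "(\<Sum>m<?N. c m * (A ^\<^sub>m Suc m) $$ (i,j)) =
        (\<Sum>m<Suc ?N. (if m = 0 then 0 else c (m - 1)) * (A ^\<^sub>m m) $$ (i,j))"
      by (subst sum.lessThan_Suc_shift) simp
    also have "shift_prod n A L $$ (i,j) = (\<Sum>m<Suc ?N. (if m = ?N then 1 else c m) * (A ^\<^sub>m m) $$ (i,j))"
      using c[OF i j] by (simp add: sum.lessThan_Suc)
    finally show ?thesis
      by (simp add: c'_def left_diff_distrib sum_subtractf sum_distrib_left distrib_left mult.assoc)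
  qed
  then show ?case by auto
qed

lemma pow_mat_lin_comb_lower_powers:
  fixes A :: "'a :: comm_ring_1 mat"
  assumes A: "A \<in> carrier_mat n n"
    and rel: "\<And>i j. i < n \<Longrightarrow> j < n \<Longrightarrow> (A ^\<^sub>m Suc d) $$ (i,j) = (\<Sum>m<Suc d. a m * (A ^\<^sub>m m) $$ (i,j))"
  shows "\<exists>b. \<forall>i<n. \<forall>j<n. (A ^\<^sub>m k) $$ (i,j) = (\<Sum>m<Suc d. b m * (A ^\<^sub>m m) $$ (i,j))"
proof (induct k)
  case 0
  have "(A ^\<^sub>m 0) $$ (i,j) = (\<Sum>m<Suc d. (if m = 0 then 1 else 0) * (A ^\<^sub>m m) $$ (i,j))" for i j
    by (subst sum.lessThan_Suc_shift) simp
  then show ?case by (intro exI[of _ "\<lambda>m. if m = 0 then 1 else 0"] allI impI)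
next
  case (Suc k)
  then obtain b where b: "\<And>i j. i < n \<Longrightarrow> j < n \<Longrightarrow> (A ^\<^sub>m k) $$ (i,j) = (\<Sum>m<Suc d. b m * (A ^\<^sub>m m) $$ (i,j))"
    by blast
  \<comment> \<open>multiply by \<open>A\<close> and reduce the top power \<open>A\<^bsup>d+1\<^esup>\<close> with \<open>rel\<close>\<close>
  define b' where "b' m = (if m = 0 then 0 else b (m - 1)) + b d * a m" for m
  have "(A ^\<^sub>m Suc k) $$ (i,j) = (\<Sum>m<Suc d. b' m * (A ^\<^sub>m m) $$ (i,j))" if i: "i < n" and j: "j < n" for i j
  proof -
    have "(A ^\<^sub>m Suc k) $$ (i,j) = (\<Sum>l<n. A $$ (i,l) * (\<Sum>m<Suc d. b m * (A ^\<^sub>m m) $$ (l,j)))"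
      using index_pow_mat_Suc_left[OF A i j] b j by (auto intro!: sum.cong)
    also have "\<dots> = (\<Sum>m<d. b m * (A ^\<^sub>m Suc m) $$ (i,j)) + b d * (\<Sum>m<Suc d. a m * (A ^\<^sub>m m) $$ (i,j))"
      by (subst index_mult_pow_combination[OF A i j]) (simp only: sum.lessThan_Suc rel[OF i j])
    also have "(\<Sum>m<d. b m * (A ^\<^sub>m Suc m) $$ (i,j)) =
        (\<Sum>m<Suc d. (if m = 0 then 0 else b (m - 1)) * (A ^\<^sub>m m) $$ (i,j))"
      by (subst sum.lessThan_Suc_shift) simp
    finally show ?thesis
      by (simp add: b'_def distrib_left distrib_right sum.distrib sum_distrib_left mult.assoc)
  qed
  then show ?case by blast
qed

lemma symmetric_pow_mat_lin_comb:
  fixes A :: "real mat"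
  assumes A: "A \<in> carrier_mat n n" and sym: "\<And>i j. i < n \<Longrightarrow> j < n \<Longrightarrow> A $$ (i,j) = A $$ (j,i)"
    and card: "card {\<theta>. eigenvalue A \<theta>} = Suc d"
  shows "\<exists>b. \<forall>k. \<forall>i<n. \<forall>j<n. (A ^\<^sub>m k) $$ (i,j) = (\<Sum>m<Suc d. b k m * (A ^\<^sub>m m) $$ (i,j))"
proof -
  obtain L where L: "distinct L" "set L = {\<theta>. eigenvalue A \<theta>}" "shift_prod n A L = 0\<^sub>m n n"
    using symmetric_distinct_eigenvalues_annihilate[OF A sym] by blast
  have len: "length L = Suc d" using card L(1,2) distinct_card[OF L(1)] by simp
  obtain c where c: "\<And>i j. i < n \<Longrightarrow> j < n \<Longrightarrow>
      shift_prod n A L $$ (i,j) = (A ^\<^sub>m Suc d) $$ (i,j) + (\<Sum>m<Suc d. c m * (A ^\<^sub>m m) $$ (i,j))"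
    using shift_prod_expansion[OF A, of L] len by auto
  have rel: "(A ^\<^sub>m Suc d) $$ (i,j) = (\<Sum>m<Suc d. - c m * (A ^\<^sub>m m) $$ (i,j))" if "i < n" "j < n" for i j
    using c[OF that] L(3) that by (simp add: sum_negf eq_neg_iff_add_eq_0)
  have "\<forall>k. \<exists>b. \<forall>i<n. \<forall>j<n. (A ^\<^sub>m k) $$ (i,j) = (\<Sum>m<Suc d. b m * (A ^\<^sub>m m) $$ (i,j))"
    using pow_mat_lin_comb_lower_powers[OF A rel] by blast
  then show ?thesis by metis
qed

section \<open>Entries of the exponential series\<close>

definition exp_series_term :: "real mat \<Rightarrow> real \<Rightarrow> nat \<Rightarrow> nat \<Rightarrow> nat \<Rightarrow> complex" where
  "exp_series_term A t i j k = (\<i> * complex_of_real t) ^ k / of_nat (fact k) * complex_of_real ((A ^\<^sub>m k) $$ (i, j))"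

lemma summable_norm_exp_series_term:
  assumes bnd: "\<And>k. \<bar>(A ^\<^sub>m k) $$ (i,j)\<bar> \<le> B ^ k"
  shows "summable (\<lambda>k. norm (exp_series_term A t i j k))"
proof (rule summable_comparison_test[OF _ summable_exp[of "\<bar>t\<bar> * B"]])
  have "norm (norm (exp_series_term A t i j k)) = \<bar>t\<bar> ^ k / fact k * \<bar>(A ^\<^sub>m k) $$ (i,j)\<bar>" for k
    unfolding exp_series_term_def by (simp add: norm_mult norm_divide norm_power)
  also have "\<dots> k \<le> inverse (fact k) * (\<bar>t\<bar> * B) ^ k" for k
    using mult_left_mono[OF bnd, of "\<bar>t\<bar> ^ k / fact k" k] by (simp add: power_mult_distrib field_simps)
  finally show "\<exists>N. \<forall>k\<ge>N. norm (norm (exp_series_term A t i j k)) \<le> inverse (fact k) * (\<bar>t\<bar> * B) ^ k"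
    by blast
qed

lemma exp_series_mult_neg_entry:
  fixes A :: "real mat"
  assumes A: "A \<in> carrier_mat n n"
    and bnd: "\<And>k i j. i < n \<Longrightarrow> j < n \<Longrightarrow> \<bar>(A ^\<^sub>m k) $$ (i,j)\<bar> \<le> B ^ k"
    and z: "z < n" and z': "z' < n"
  shows "(\<Sum>w<n. suminf (exp_series_term A t z w) * suminf (exp_series_term A (-t) w z')) = (if z = z' then 1 else 0)"
proof -
  define g where "g w m = (\<Sum>i\<le>m. exp_series_term A t z w i * exp_series_term A (-t) w z' (m - i))" for w m
  have summable: "summable (\<lambda>k. norm (exp_series_term A s i j k))" if "i < n" "j < n" for s i j
    using summable_norm_exp_series_term bnd that by blast
  have "(\<Sum>w<n. suminf (exp_series_term A t z w) * suminf (exp_series_term A (-t) w z')) = (\<Sum>w<n. suminf (g w))"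
    unfolding g_def by (intro sum.cong refl Cauchy_product summable) (use z z' in auto)
  also have "\<dots> = (\<Sum>m. \<Sum>w<n. g w m)"
    unfolding g_def by (intro suminf_sum[symmetric] summable_Cauchy_product summable) (use z z' in auto)
  also have "\<dots> = (\<Sum>m. if m = 0 then (if z = z' then 1 else 0) else 0)"
  proof (rule arg_cong[where f = suminf], rule ext)
    fix m
    define x where "x = \<i> * complex_of_real t"
    define y where "y = \<i> * complex_of_real (-t)"
    have "(\<Sum>w<n. g w m) = (\<Sum>w<n. \<Sum>i\<le>m. (x ^ i / of_nat (fact i) * (y ^ (m - i) / of_nat (fact (m - i))))
            * complex_of_real ((A ^\<^sub>m i) $$ (z, w) * (A ^\<^sub>m (m - i)) $$ (w, z')))"
      unfolding g_def exp_series_term_def x_def y_def by (simp add: mult_ac)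
    also have "\<dots> = (\<Sum>i\<le>m. (x ^ i / of_nat (fact i) * (y ^ (m - i) / of_nat (fact (m - i))))
            * complex_of_real (\<Sum>w<n. (A ^\<^sub>m i) $$ (z, w) * (A ^\<^sub>m (m - i)) $$ (w, z')))"
      by (subst sum.swap) (simp add: sum_distrib_left)
    also have "\<dots> = (\<Sum>i\<le>m. (x ^ i / of_nat (fact i) * (y ^ (m - i) / of_nat (fact (m - i))))
            * complex_of_real ((A ^\<^sub>m m) $$ (z, z')))"
    proof (rule sum.cong[OF refl])
      fix i assume "i \<in> {..m}"
      then have "A ^\<^sub>m m = A ^\<^sub>m i * A ^\<^sub>m (m - i)" using pow_mat_add[OF A, of i "m - i"] by simp
      then show "(x ^ i / of_nat (fact i) * (y ^ (m - i) / of_nat (fact (m - i))))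
            * complex_of_real (\<Sum>w<n. (A ^\<^sub>m i) $$ (z, w) * (A ^\<^sub>m (m - i)) $$ (w, z')) =
           (x ^ i / of_nat (fact i) * (y ^ (m - i) / of_nat (fact (m - i))))
            * complex_of_real ((A ^\<^sub>m m) $$ (z, z'))"
        using index_mult_mat_sum[OF pow_carrier_mat[OF A] pow_carrier_mat[OF A] z z'] by simp
    qed
    also have "\<dots> = (x + y) ^ m / of_nat (fact m) * complex_of_real ((A ^\<^sub>m m) $$ (z, z'))"
      using exp_series_add_commuting[of x y m]
      by (simp only: sum_distrib_right[symmetric]) (simp add: scaleR_conv_of_real divide_inverse mult_ac)
    also have "\<dots> = (if m = 0 then (if z = z' then 1 else 0) else 0)"
      using A z z' by (auto simp: x_def y_def)
    finally show "(\<Sum>w<n. g w m) = (if m = 0 then (if z = z' then 1 else 0) else 0)" .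
  qed
  also have "\<dots> = (if z = z' then 1 else 0)"
    using sums_unique[OF sums_single[of 0 "\<lambda>_. (if z = z' then 1 else 0 :: complex)"]] by simp
  finally show ?thesis .
qed

lemma cnj_suminf_exp_series_term:
  assumes bnd: "\<And>k. \<bar>(A ^\<^sub>m k) $$ (i,j)\<bar> \<le> B ^ k"
  shows "cnj (suminf (exp_series_term A t i j)) = suminf (exp_series_term A (-t) i j)"
proof -
  have "summable (exp_series_term A t i j)"
    by (rule summable_norm_cancel[OF summable_norm_exp_series_term[OF bnd]])
  then have "(\<lambda>k. cnj (exp_series_term A t i j k)) sums cnj (suminf (exp_series_term A t i j))"
    by (simp add: sums_cnj summable_sums)
  moreover have "(\<lambda>k. cnj (exp_series_term A t i j k)) = exp_series_term A (-t) i j"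
    by (rule ext) (simp add: exp_series_term_def)
  ultimately show ?thesis by (metis sums_unique)
qed

lemma norm_suminf_exp_series_term_le_1:
  fixes A :: "real mat"
  assumes A: "A \<in> carrier_mat n n" and sym: "\<And>i j. i < n \<Longrightarrow> j < n \<Longrightarrow> A $$ (i,j) = A $$ (j,i)"
    and bnd: "\<And>k i j. i < n \<Longrightarrow> j < n \<Longrightarrow> \<bar>(A ^\<^sub>m k) $$ (i,j)\<bar> \<le> B ^ k"
    and z: "z < n" and w: "w < n"
  shows "cmod (suminf (exp_series_term A t z w)) \<le> 1"
proof -
  define U where "U w = suminf (exp_series_term A t z w)" for w
  \<comment> \<open>row \<open>z\<close> of the unitary matrix \<open>exp (i t A)\<close> has norm 1\<close>
  have "cnj (U w') = suminf (exp_series_term A (-t) w' z)" if "w' < n" for w'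
    using cnj_suminf_exp_series_term[of A z w' B t] bnd z that pow_mat_symmetric[OF A sym that z]
    unfolding U_def exp_series_term_def by simp
  then have "(\<Sum>w'<n. U w' * cnj (U w')) = 1"
    using exp_series_mult_neg_entry[OF A bnd z z, of t] unfolding U_def by simp
  then have "(\<Sum>w'<n. (cmod (U w'))^2) = 1"
    by (metis (no_types, lifting) complex_norm_square of_real_eq_1_iff of_real_sum sum.cong)
  moreover have "(cmod (U w))^2 \<le> (\<Sum>w'<n. (cmod (U w'))^2)"
    by (rule member_le_sum) (use w in auto)
  ultimately show ?thesis unfolding U_def by (simp add: power_le_one_iff abs_square_le_1)
qed

section \<open>Adjacency matrices, walks and transition amplitudes\<close>

lemma adj_mat_carrier[simp]: "adj_mat n E \<in> carrier_mat n n"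
  unfolding adj_mat_def by simp

lemma index_adj_mat: "i < n \<Longrightarrow> j < n \<Longrightarrow> adj_mat n E $$ (i,j) = (if E i j then 1 else 0)"
  unfolding adj_mat_def by simp

lemma adj_mat_symmetric:
  "simple_graph n E \<Longrightarrow> i < n \<Longrightarrow> j < n \<Longrightarrow> adj_mat n E $$ (i,j) = adj_mat n E $$ (j,i)"
  unfolding simple_graph_def by (simp add: index_adj_mat)

lemma adj_mat_pow_nonneg: "i < n \<Longrightarrow> j < n \<Longrightarrow> (adj_mat n E ^\<^sub>m k) $$ (i,j) \<ge> 0"
proof (induct k arbitrary: j)
  case (Suc k)
  then show ?case using index_pow_mat_Suc[OF adj_mat_carrier Suc.prems]
    by (auto intro!: sum_nonneg simp: index_adj_mat)
qed (simp add: adj_mat_def)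

lemma adj_mat_pow_le: "i < n \<Longrightarrow> j < n \<Longrightarrow> (adj_mat n E ^\<^sub>m k) $$ (i,j) \<le> real n ^ k"
proof (induct k arbitrary: j)
  case (Suc k)
  have "(adj_mat n E ^\<^sub>m Suc k) $$ (i,j) = (\<Sum>l<n. (adj_mat n E ^\<^sub>m k) $$ (i,l) * adj_mat n E $$ (l,j))"
    using index_pow_mat_Suc[OF adj_mat_carrier Suc.prems] .
  also have "\<dots> \<le> (\<Sum>l<n. real n ^ k)"
    using Suc adj_mat_pow_nonneg[of i n _ E k] by (intro sum_mono) (auto simp: index_adj_mat)
  finally show ?case by simp
qed (simp add: adj_mat_def)

lemma abs_adj_mat_pow_le: "i < n \<Longrightarrow> j < n \<Longrightarrow> \<bar>(adj_mat n E ^\<^sub>m k) $$ (i,j)\<bar> \<le> real n ^ k"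
  using adj_mat_pow_le[of i n j E k] adj_mat_pow_nonneg[of i n j E k] by simp

lemma walk_of_len_if_adj_mat_pow_nonzero:
  "i < n \<Longrightarrow> j < n \<Longrightarrow> (adj_mat n E ^\<^sub>m k) $$ (i,j) \<noteq> 0 \<Longrightarrow> walk_of_len n E k i j"
proof (induct k arbitrary: j)
  case 0
  then have "i = j" by (auto simp: adj_mat_def split: if_splits)
  then show ?case using 0 unfolding walk_of_len_def by (intro exI[of _ "\<lambda>_. i"]) auto
next
  case (Suc k)
  have "(\<Sum>l<n. (adj_mat n E ^\<^sub>m k) $$ (i,l) * adj_mat n E $$ (l,j)) \<noteq> 0"
    using Suc.prems index_pow_mat_Suc[OF adj_mat_carrier Suc.prems(1,2)] by simp
  then obtain l where l: "l < n" "(adj_mat n E ^\<^sub>m k) $$ (i,l) * adj_mat n E $$ (l,j) \<noteq> 0"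
    by (meson lessThan_iff sum.neutral)
  then have "E l j" and "(adj_mat n E ^\<^sub>m k) $$ (i,l) \<noteq> 0"
    using Suc.prems by (auto simp: index_adj_mat split: if_splits)
  moreover obtain p where "p 0 = i" "p k = l" "\<forall>m\<le>k. p m < n" "\<forall>m<k. E (p m) (p (Suc m))"
    using Suc(1)[OF Suc.prems(1) l(1) \<open>(adj_mat n E ^\<^sub>m k) $$ (i,l) \<noteq> 0\<close>]
    unfolding walk_of_len_def by blast
  ultimately show ?case unfolding walk_of_len_def
    by (intro exI[of _ "p(Suc k := j)"]) (use Suc.prems in \<open>auto simp: le_Suc_eq less_Suc_eq\<close>)
qed

lemma adj_mat_pow_pos_if_walk_of_len: "walk_of_len n E k i j \<Longrightarrow> (adj_mat n E ^\<^sub>m k) $$ (i,j) > 0"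
proof (induct k arbitrary: j)
  case 0
  then show ?case unfolding walk_of_len_def by (auto simp: adj_mat_def)
next
  case (Suc k)
  from Suc.prems obtain p where p: "p 0 = i" "p (Suc k) = j" "\<forall>m\<le>Suc k. p m < n"
      "\<forall>m<Suc k. E (p m) (p (Suc m))"
    unfolding walk_of_len_def by blast
  have "walk_of_len n E k i (p k)" unfolding walk_of_len_def
    by (rule exI[of _ p]) (use p in auto)
  moreover have ijk: "i < n" "j < n" "p k < n" and "E (p k) j" using p by auto
  ultimately have "0 < (adj_mat n E ^\<^sub>m k) $$ (i, p k) * adj_mat n E $$ (p k, j)"
    using Suc(1) by (simp add: index_adj_mat)
  also have "\<dots> \<le> (\<Sum>l<n. (adj_mat n E ^\<^sub>m k) $$ (i,l) * adj_mat n E $$ (l,j))"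
    using ijk adj_mat_pow_nonneg by (intro member_le_sum) (auto simp: index_adj_mat)
  finally show ?case using index_pow_mat_Suc[OF adj_mat_carrier ijk(1,2)] by simp
qed

lemma adj_mat_pow_eq_0_below_graph_dist:
  "i < n \<Longrightarrow> j < n \<Longrightarrow> k < graph_dist n E i j \<Longrightarrow> (adj_mat n E ^\<^sub>m k) $$ (i,j) = 0"
  unfolding graph_dist_def by (meson not_less_Least walk_of_len_if_adj_mat_pow_nonzero)

lemma walk_of_len_graph_dist:
  "connected_graph n E \<Longrightarrow> i < n \<Longrightarrow> j < n \<Longrightarrow> walk_of_len n E (graph_dist n E i j) i j"
  unfolding connected_graph_def graph_dist_def by (meson LeastI)

lemma diameter_attained:
  assumes "connected_graph n E"
  obtains u v where "u < n" "v < n" "graph_dist n E u v = diameter n E"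
proof -
  let ?D = "{graph_dist n E u v | u v. u < n \<and> v < n}"
  have "0 < n" using assms unfolding connected_graph_def by simp
  then have "graph_dist n E 0 0 \<in> ?D" by blast
  moreover have "finite ?D" by (rule finite_image_set2) simp_all
  ultimately have "diameter n E \<in> ?D"
    unfolding diameter_def by (intro Max_in) auto
  then show thesis using that by auto
qed

lemma transition_entry_eq_suminf:
  "transition_entry n E t w z = suminf (exp_series_term (adj_mat n E) t w z)"
  unfolding transition_entry_def exp_series_term_def ..

lemma norm_transition_entry_le_1:
  assumes "simple_graph n E" and "z < n" and "w < n"
  shows "cmod (transition_entry n E t w z) \<le> 1"
  unfolding transition_entry_eq_suminf
proof (rule norm_suminf_exp_series_term_le_1[OF adj_mat_carrier, where B = "real n"])
  show "adj_mat n E $$ (i,j) = adj_mat n E $$ (j,i)" if "i < n" "j < n" for i j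
    using adj_mat_symmetric[OF assms(1) that] .
qed (use abs_adj_mat_pow_le assms(2,3) in auto)

lemma transition_entry_at_diameter_proportional:
  assumes sg: "simple_graph n E" and conn: "connected_graph n E" and se: "spectrally_extremal n E"
  shows "\<exists>F. \<forall>z<n. \<forall>w<n. graph_dist n E z w = diameter n E \<longrightarrow>
           transition_entry n E t w z = complex_of_real ((adj_mat n E ^\<^sub>m diameter n E) $$ (z,w)) * F"
proof -
  define A where "A = adj_mat n E"
  define d where "d = diameter n E"
  have A: "A \<in> carrier_mat n n" and sym: "\<And>i j. i < n \<Longrightarrow> j < n \<Longrightarrow> A $$ (i,j) = A $$ (j,i)"
    unfolding A_def using adj_mat_symmetric[OF sg] by auto
  have "card {\<theta>. eigenvalue A \<theta>} = Suc d"
    using se unfolding spectrally_extremal_def A_def d_def by simp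
  then obtain b where b: "\<forall>k. \<forall>i<n. \<forall>j<n. (A ^\<^sub>m k) $$ (i,j) = (\<Sum>m<Suc d. b k m * (A ^\<^sub>m m) $$ (i,j))"
    using symmetric_pow_mat_lin_comb[OF A sym] by blast
  define f where "f k = (\<i> * complex_of_real t) ^ k / of_nat (fact k) * complex_of_real (b k d)" for k
  have series: "exp_series_term A t w z = (\<lambda>k. complex_of_real ((A ^\<^sub>m d) $$ (z,w)) * f k)"
    if z: "z < n" and w: "w < n" and dist: "graph_dist n E z w = d" for z w
  proof
    fix k
    have "(A ^\<^sub>m k) $$ (z,w) = (\<Sum>m<Suc d. b k m * (A ^\<^sub>m m) $$ (z,w))"
      using b z w by blast
    also have "\<dots> = (\<Sum>m<d. b k m * (A ^\<^sub>m m) $$ (z,w)) + b k d * (A ^\<^sub>m d) $$ (z,w)"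
      by simp
    also have "(\<Sum>m<d. b k m * (A ^\<^sub>m m) $$ (z,w)) = 0"
      using adj_mat_pow_eq_0_below_graph_dist[OF z w] dist unfolding A_def by simp
    finally show "exp_series_term A t w z k = complex_of_real ((A ^\<^sub>m d) $$ (z,w)) * f k"
      unfolding exp_series_term_def f_def using pow_mat_symmetric[OF A sym w z, of k] by (simp add: mult_ac)
  qed
  \<comment> \<open>\<open>f\<close> rescales the amplitude series at a pair realizing the diameter, where \<open>(A\<^sup>d)\<^sub>u\<^sub>v > 0\<close>\<close>
  obtain u v where u: "u < n" and v: "v < n" and dist_uv: "graph_dist n E u v = d"
    using diameter_attained[OF conn] unfolding d_def by blast
  have "(A ^\<^sub>m d) $$ (u,v) > 0"
    using adj_mat_pow_pos_if_walk_of_len[OF walk_of_len_graph_dist[OF conn u v]] dist_uv unfolding A_def by simp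
  moreover have "summable (exp_series_term A t v u)"
    unfolding A_def by (rule summable_norm_cancel[OF summable_norm_exp_series_term[OF abs_adj_mat_pow_le[OF v u]]])
  ultimately have "summable f"
    using summable_mult[of "exp_series_term A t v u" "complex_of_real (1 / (A ^\<^sub>m d) $$ (u,v))"]
      series[OF u v dist_uv] by (simp add: field_simps)
  then have "transition_entry n E t w z = complex_of_real ((A ^\<^sub>m d) $$ (z,w)) * suminf f"
    if "z < n" "w < n" "graph_dist n E z w = d" for z w
    using series[OF that] suminf_mult[OF \<open>summable f\<close>] unfolding transition_entry_eq_suminf A_def by simp
  then show ?thesis unfolding A_def d_def by blast
qed

theorem corollary4p2:
  fixes n :: nat and E :: "nat \<Rightarrow> nat \<Rightarrow> bool" and \<tau> :: real and u v :: nat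
  assumes "simple_graph n E" and "connected_graph n E" and "spectrally_extremal n E"
    and "u < n" and "v < n"
    and "graph_dist n E u v = diameter n E"
    and "pst n E \<tau> u v"
  shows "\<forall>z<n. \<forall>w<n. graph_dist n E z w = diameter n E \<longrightarrow>
           (adj_mat n E ^\<^sub>m diameter n E) $$ (z, w) \<le> (adj_mat n E ^\<^sub>m diameter n E) $$ (u, v) \<and>
           ((adj_mat n E ^\<^sub>m diameter n E) $$ (z, w) = (adj_mat n E ^\<^sub>m diameter n E) $$ (u, v)
              \<longleftrightarrow> pst n E \<tau> z w)"
proof (intro allI impI)
  let ?D = "adj_mat n E ^\<^sub>m diameter n E"
  obtain F where F: "\<And>z w. z < n \<Longrightarrow> w < n \<Longrightarrow> graph_dist n E z w = diameter n E \<Longrightarrow>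
      transition_entry n E \<tau> w z = complex_of_real (?D $$ (z,w)) * F"
    using transition_entry_at_diameter_proportional[OF assms(1-3)] by blast
  have norm: "cmod (transition_entry n E \<tau> w z) = ?D $$ (z,w) * cmod F"
    if "z < n" "w < n" "graph_dist n E z w = diameter n E" for z w
    using F[OF that] adj_mat_pow_nonneg[OF that(1,2)] by (simp add: norm_mult)
  have uv: "?D $$ (u,v) * cmod F = 1"
    using assms(7) norm[OF assms(4-6)] unfolding pst_def by simp
  then have "cmod F > 0" by (metis mult_zero_right norm_ge_zero order_le_less zero_neq_one)
  fix z w assume zw: "z < n" "w < n" "graph_dist n E z w = diameter n E"
  have "?D $$ (z,w) * cmod F \<le> ?D $$ (u,v) * cmod F"
    using norm_transition_entry_le_1[OF assms(1) zw(1,2), of \<tau>] norm[OF zw] uv by simp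
  moreover have "pst n E \<tau> z w \<longleftrightarrow> ?D $$ (z,w) * cmod F = ?D $$ (u,v) * cmod F"
    unfolding pst_def using norm[OF zw] uv by simp
  ultimately show "?D $$ (z,w) \<le> ?D $$ (u,v) \<and> (?D $$ (z,w) = ?D $$ (u,v) \<longleftrightarrow> pst n E \<tau> z w)"
    using \<open>cmod F > 0\<close> by simp
qed

end
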